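(* Let $d$, $p$ and $w$ be fixed nonnegative integers. There exist a constant $C>0$ and an integer $N$, depending only on $d,p,w$, such that the following holds. Let $\Delta$ be a $(d-1)$-dimensional simplicial complex whose vertex set is a disjoint union $V(\Delta)=T\sqcup W$ with $|T|=n\ge N$ and $|W|=w$, and suppose that $\tilde H_{p-1}(\mathrm{lk}_\Delta(\{v\})[W];\mathbf{k})\neq 0$ for every $v\in T$. Then there is an integer $i\ge 2$ such that there are at least $Cn^i$ subsets $W'\subseteq T$ with $|W'|=i$ and $\tilde H_{p+i-2}(\Delta[W'\cup W];\mathbf{k})\neq 0$.
   Context: A simplicial complex $\Delta$ on a finite vertex set $V$ is a family of subsets of $V$ (faces) closed under taking subsets; its dimension is $\max\{|F|:F\in\Delta\}-1$. For $U\subseteq V$, $\Delta[U]=\{F\in\Delta:F\subseteq U\}$; for a face $F$, $\mathrm{lk}_\Delta(F)=\{G\setminus F: F\subseteq G\in\Delta\}$. Fix a field $\mathbf{k}$; $\tilde H_j(\cdot;\mathbf{k})$ is reduced simplicial homology. *)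

theory Defs
  imports Complex_Main
begin

definition simplicial_complex :: "'a set set \<Rightarrow> bool" where
  "simplicial_complex \<Delta> \<longleftrightarrow> (\<forall>F\<in>\<Delta>. finite F \<and> (\<forall>G. G \<subseteq> F \<longrightarrow> G \<in> \<Delta>))"

definition induced :: "'a set set \<Rightarrow> 'a set \<Rightarrow> 'a set set" where
  "induced \<Delta> U = {F \<in> \<Delta>. F \<subseteq> U}"

definition lk :: "'a set set \<Rightarrow> 'a set \<Rightarrow> 'a set set" where
  "lk \<Delta> F = {G - F | G. G \<in> \<Delta> \<and> F \<subseteq> G}"

(* simplicial j-chains (j >= -1, the empty face is the unique (-1)-face: augmented complex),
   with faces oriented by the natural order of the vertices *)
definition chains :: "nat set set \<Rightarrow> int \<Rightarrow> (nat set \<Rightarrow> 'k::field) set" where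
  "chains \<Delta> j = {c. \<forall>F. c F \<noteq> 0 \<longrightarrow> F \<in> \<Delta> \<and> int (card F) = j + 1}"

(* simplicial boundary map: coefficient of G in the boundary of the oriented face G \<union> {v}
   is (-1)^(position of v in the increasingly ordered face) *)
definition bdry :: "nat set set \<Rightarrow> (nat set \<Rightarrow> 'k::field) \<Rightarrow> (nat set \<Rightarrow> 'k)" where
  "bdry \<Delta> c G = (if G \<in> \<Delta> then
      (\<Sum>v\<in>{v. v \<notin> G \<and> insert v G \<in> \<Delta>}. (-1) ^ card {u\<in>G. u < v} * c (insert v G))
    else 0)"

definition reduced_homology_nonzero :: "'k::field itself \<Rightarrow> nat set set \<Rightarrow> int \<Rightarrow> bool" where
  "reduced_homology_nonzero K \<Delta> j \<longleftrightarrow>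
     (\<exists>c::nat set \<Rightarrow> 'k. c \<in> chains \<Delta> j \<and> bdry \<Delta> c = (\<lambda>_. 0) \<and>
        \<not> (\<exists>b\<in>chains \<Delta> (j + 1). bdry \<Delta> b = c))"

end

theory Submission
  imports Defs "HOL-Library.Ramsey"
begin

(*
  The heart of the proof is a lifting construction (locale cycle_lift): if a (p-1)-cycle z lies
  in the restricted links lk(G)[W] of all (i-1)-subsets G of an i-set W', all these links lie in a
  complex L, z does not bound in L, but every (p-1)-cycle of lk(W')[W] bounds in L, then the signed
  join  sum_G tau(G) (G * z)  is a (p+i-2)-cycle of D[W' + W] that does not bound there.

  By Ramsey's theorem every large vertex set contains a (d+1)-set S on which the restricted link of
  G <= S depends only on |G|; taking the largest size j at which a cycle of these links escapes
  L = lk(v)[W] produces the hypotheses of the lifting with i = j + 1 (homogeneous_set_cycle).  Hence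
  there is a threshold R such that every R-subset of T contains a good set W' (cycle_threshold_exists),
  and double counting over the R-subsets of T (supersaturation) yields Omega(n^i) good i-sets.
*)

text \<open>Orienting faces by the natural order of vertices, the face \<open>A \<union> H\<close> with \<open>A \<inter> H = {}\<close>
  differs from the concatenation "A then H" by the sign of the shuffle moving every vertex of \<open>H\<close>
  past the larger vertices of \<open>A\<close>.\<close>

definition shuffle_sign :: "nat set \<Rightarrow> nat set \<Rightarrow> 'k::field" where
  "shuffle_sign A H = (-1) ^ (\<Sum>h\<in>H. card {a\<in>A. a < h})"

lemma shuffle_sign_square [simp]: "shuffle_sign A H * shuffle_sign A H = (1::'k::field)"
  by (simp add: shuffle_sign_def)

lemma shuffle_sign_nonzero: "shuffle_sign A H \<noteq> (0::'k::field)"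
  by (simp add: shuffle_sign_def)

lemma shuffle_sign_insert_right:
  assumes "finite H" "v \<notin> H"
  shows "(shuffle_sign A (insert v H) :: 'k::field) = shuffle_sign A H * (-1) ^ card {a\<in>A. a < v}"
  using assms by (simp add: shuffle_sign_def power_add)

lemma card_less_Un:
  assumes "finite A" "finite B" "A \<inter> B = {}"
  shows "card {u\<in>A \<union> B. u < y} = card {u\<in>A. u < y} + card {u\<in>B. u < y}"
proof -
  have "{u\<in>A \<union> B. u < y} = {u\<in>A. u < y} \<union> {u\<in>B. u < y}" by auto
  then show ?thesis using assms by (simp add: card_Un_disjoint disjoint_iff)
qed

lemma card_less_plus_greater:
  fixes H :: "nat set"
  assumes "finite H" "y \<notin> H"
  shows "card {u\<in>H. u < y} + card {h\<in>H. y < h} = card H"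
proof -
  have "H = {u\<in>H. u < y} \<union> {h\<in>H. y < h}" using assms(2) by (auto simp: not_less_iff_gr_or_eq)
  then have "card H = card ({u\<in>H. u < y} \<union> {h\<in>H. y < h})" by simp
  also have "\<dots> = card {u\<in>H. u < y} + card {h\<in>H. y < h}"
    by (rule card_Un_disjoint) (use assms(1) in auto)
  finally show ?thesis by simp
qed

lemma shuffle_sign_insert_left:
  assumes "finite A" "finite H" "y \<notin> A"
  shows "(shuffle_sign (insert y A) H :: 'k::field) = shuffle_sign A H * (-1) ^ card {h\<in>H. y < h}"
proof -
  have "card {a\<in>insert y A. a < h} = card {a\<in>A. a < h} + (if y < h then 1 else 0)" for h
  proof -
    have "{a\<in>insert y A. a < h} = (if y < h then insert y {a\<in>A. a < h} else {a\<in>A. a < h})" by auto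
    then show ?thesis using assms by simp
  qed
  then have "(\<Sum>h\<in>H. card {a\<in>insert y A. a < h}) = (\<Sum>h\<in>H. card {a\<in>A. a < h}) + card {h\<in>H. y < h}"
    using assms by (simp add: sum.distrib sum.If_cases Int_def)
  then show ?thesis by (simp add: shuffle_sign_def power_add)
qed

lemma shuffle_sign_move:
  assumes fA: "finite A" and fH: "finite H" and AH: "A \<inter> H = {}" and yA: "y \<notin> A" and yH: "y \<notin> H"
  shows "shuffle_sign A H * (-1) ^ card {u\<in>A \<union> H. u < y} * shuffle_sign (insert y A) H
       = ((-1) ^ card {u\<in>A. u < y} * (-1) ^ card H :: 'k::field)"
proof -
  have H: "card H = card {u\<in>H. u < y} + card {h\<in>H. y < h}"
    using card_less_plus_greater[OF fH yH] by simp
  have "shuffle_sign A H * (-1) ^ card {u\<in>A \<union> H. u < y} * shuffle_sign (insert y A) H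
      = (shuffle_sign A H * shuffle_sign A H) * ((-1) ^ card {u\<in>A. u < y}
          * ((-1) ^ card {u\<in>H. u < y} * (-1) ^ card {h\<in>H. y < h}) :: 'k)"
    unfolding shuffle_sign_insert_left[OF fA fH yA] card_less_Un[OF fA fH AH]
    by (simp add: power_add mult_ac)
  also have "\<dots> = (-1) ^ card {u\<in>A. u < y} * (-1) ^ card H"
    unfolding shuffle_sign_square H by (simp add: power_add)
  finally show ?thesis .
qed

lemma bdry_linear:
  "bdry K (\<lambda>F. s * b1 F + t * b2 F) = (\<lambda>G. s * bdry K b1 G + t * (bdry K b2 G :: 'k::field))"
  by (rule ext) (simp add: bdry_def sum_distrib_left sum.distrib[symmetric] distrib_left mult.left_commute)

lemma bdry_scale: "bdry K (\<lambda>F. s * b F) = (\<lambda>G. s * (bdry K b G :: 'k::field))"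
  by (rule ext) (simp add: bdry_def sum_distrib_left mult.left_commute)

lemma bdry_zero: "bdry K (\<lambda>_. 0::'k::field) = (\<lambda>_. 0)"
  by (rule ext) (simp add: bdry_def)

lemma chains_linear:
  assumes "b1 \<in> chains K j" "b2 \<in> chains K j"
  shows "(\<lambda>F. s * b1 F + t * (b2 F :: 'k::field)) \<in> chains K j"
  unfolding chains_def
proof (intro CollectI allI impI)
  fix F assume "s * b1 F + t * b2 F \<noteq> 0"
  then have "b1 F \<noteq> 0 \<or> b2 F \<noteq> 0" by auto
  then show "F \<in> K \<and> int (card F) = j + 1" using assms by (auto simp: chains_def)
qed

lemma chains_mono: "K \<subseteq> L \<Longrightarrow> chains K j \<subseteq> chains L j"
  unfolding chains_def by auto

lemma finite_cofaces: "finite L \<Longrightarrow> finite {v. v \<notin> G \<and> insert v G \<in> L}"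
proof -
  assume "finite L"
  moreover have "inj_on (\<lambda>v. insert v G) (- G)" unfolding inj_on_def by blast
  ultimately have "finite ((\<lambda>v. insert v G) -` L \<inter> - G)" by (rule finite_vimage_IntI)
  moreover have "{v. v \<notin> G \<and> insert v G \<in> L} = (\<lambda>v. insert v G) -` L \<inter> - G" by auto
  ultimately show ?thesis by simp
qed

lemma bdry_mono:
  assumes KL: "K \<subseteq> L" and fin: "finite L" and closed: "\<forall>F\<in>K. \<forall>G\<subseteq>F. G \<in> K"
    and c: "c \<in> chains K j"
  shows "bdry K c = bdry L (c :: nat set \<Rightarrow> 'k::field)"
proof
  fix G
  have c0: "c F = 0" if "F \<notin> K" for F using c that by (auto simp: chains_def)
  show "bdry K c G = bdry L c G"
  proof (cases "G \<in> K")
    case True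
    have "(\<Sum>v\<in>{v. v \<notin> G \<and> insert v G \<in> K}. (-1) ^ card {u\<in>G. u < v} * c (insert v G))
        = (\<Sum>v\<in>{v. v \<notin> G \<and> insert v G \<in> L}. (-1) ^ card {u\<in>G. u < v} * c (insert v G))"
      by (rule sum.mono_neutral_left[OF finite_cofaces[OF fin]]) (use KL c0 in auto)
    then show ?thesis using True KL by (auto simp: bdry_def)
  next
    case False
    then have "insert v G \<notin> K" for v using closed by (meson subset_insertI)
    then show ?thesis using False by (simp add: bdry_def c0)
  qed
qed

definition wlink :: "nat set set \<Rightarrow> nat set \<Rightarrow> nat set \<Rightarrow> nat set set" where
  "wlink D W A = {H. H \<subseteq> W \<and> A \<union> H \<in> D}"

lemma wlink_closed:
  assumes "\<forall>F\<in>D. \<forall>G\<subseteq>F. G \<in> D"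
  shows "\<forall>F\<in>wlink D W A. \<forall>G\<subseteq>F. G \<in> wlink D W A"
  using assms by (auto simp: wlink_def) (meson Un_mono subset_refl)

lemma wlink_antimono:
  assumes "\<forall>F\<in>D. \<forall>G\<subseteq>F. G \<in> D" "A \<subseteq> B"
  shows "wlink D W B \<subseteq> wlink D W A"
  using assms by (auto simp: wlink_def) (meson Un_mono subset_refl)

lemma wlink_vertex:
  assumes "v \<notin> W"
  shows "induced (lk D {v}) W = wlink D W {v}"
proof (rule set_eqI, rule iffI)
  fix H assume "H \<in> induced (lk D {v}) W"
  then obtain G where "H = G - {v}" "G \<in> D" "v \<in> G" "H \<subseteq> W" by (auto simp: induced_def lk_def)
  then show "H \<in> wlink D W {v}" by (simp add: wlink_def insert_absorb)
next
  fix H assume "H \<in> wlink D W {v}"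
  then have "H \<subseteq> W" "{v} \<union> H \<in> D" by (auto simp: wlink_def)
  moreover have "H = ({v} \<union> H) - {v}" using assms \<open>H \<subseteq> W\<close> by auto
  ultimately show "H \<in> induced (lk D {v}) W" unfolding induced_def lk_def by blast
qed

definition slice :: "nat set \<Rightarrow> nat set \<Rightarrow> (nat set \<Rightarrow> 'k::field) \<Rightarrow> (nat set \<Rightarrow> 'k)" where
  "slice W A b H = (if H \<subseteq> W then shuffle_sign A H * b (A \<union> H) else 0)"

text \<open>For a complex \<open>X\<close> on \<open>W' \<union> W\<close> and a face \<open>A \<union> H\<close> with \<open>A \<subseteq> W'\<close>,
  \<open>H \<subseteq> W\<close>, the boundary of \<open>b\<close> at \<open>A \<union> H\<close> splits into the boundary of the slice of \<open>b\<close> over \<open>A\<close>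
  (cofaces adding a vertex of \<open>W\<close>) and a transverse sum (cofaces adding a vertex of \<open>W'\<close>).\<close>

lemma boundary_split:
  fixes b :: "nat set \<Rightarrow> 'k::field"
  assumes fW: "finite W" and fW': "finite W'" and XV: "X \<subseteq> Pow (W' \<union> W)" and disj: "W' \<inter> W = {}"
    and AW': "A \<subseteq> W'" and HW: "H \<subseteq> W" and AH: "A \<union> H \<in> X"
  shows "shuffle_sign A H * bdry X b (A \<union> H) = bdry (wlink X W A) (slice W A b) H
     + (\<Sum>y\<in>{y\<in>W' - A. insert y (A \<union> H) \<in> X}.
          shuffle_sign A H * (-1) ^ card {u\<in>A \<union> H. u < y} * b (insert y (A \<union> H)))"
proof -
  define V1 where "V1 = {v. v \<notin> H \<and> insert v H \<in> wlink X W A}"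
  define V2 where "V2 = {y\<in>W' - A. insert y (A \<union> H) \<in> X}"
  define t where "t v = (-1) ^ card {u\<in>A \<union> H. u < v} * b (insert v (A \<union> H))" for v
  have V: "{v. v \<notin> A \<union> H \<and> insert v (A \<union> H) \<in> X} = V1 \<union> V2"
  proof (rule set_eqI, rule iffI)
    fix v assume v: "v \<in> {v. v \<notin> A \<union> H \<and> insert v (A \<union> H) \<in> X}"
    then have "v \<in> W' \<union> W" using XV by auto
    then show "v \<in> V1 \<union> V2" using v HW by (auto simp: V1_def V2_def wlink_def)
  next
    fix v assume "v \<in> V1 \<union> V2"
    then show "v \<in> {v. v \<notin> A \<union> H \<and> insert v (A \<union> H) \<in> X}"
      using AW' HW disj by (auto simp: V1_def V2_def wlink_def)
  qed
  have V1W: "V1 \<subseteq> W" and V2W: "V2 \<subseteq> W'" by (auto simp: V1_def V2_def wlink_def)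
  have fV: "finite V1" "finite V2"
    using V1W V2W fW fW' by (auto intro: finite_subset)
  have dV: "V1 \<inter> V2 = {}" using V1W V2W disj by auto
  have fA: "finite A" and fH: "finite H" using AW' HW fW fW' by (auto intro: finite_subset)
  have AHd: "A \<inter> H = {}" using AW' HW disj by auto
  have "bdry X b (A \<union> H) = (\<Sum>v\<in>V1. t v) + (\<Sum>v\<in>V2. t v)"
    using AH V sum.union_disjoint[OF fV dV] by (simp add: bdry_def t_def)
  then have split: "shuffle_sign A H * bdry X b (A \<union> H)
      = (\<Sum>v\<in>V1. shuffle_sign A H * t v) + (\<Sum>v\<in>V2. shuffle_sign A H * t v)"
    by (simp add: sum_distrib_left distrib_left)
  have "(\<Sum>v\<in>V1. shuffle_sign A H * t v)
      = (\<Sum>v\<in>V1. (-1) ^ card {u\<in>H. u < v} * slice W A b (insert v H))"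
  proof (rule sum.cong[OF refl])
    fix v assume "v \<in> V1"
    then have vH: "v \<notin> H" and "insert v H \<subseteq> W" by (auto simp: V1_def wlink_def)
    then have "slice W A b (insert v H)
        = shuffle_sign A H * (-1) ^ card {a\<in>A. a < v} * b (insert v (A \<union> H))"
      by (simp add: slice_def shuffle_sign_insert_right[OF fH vH])
    moreover have "t v = (-1) ^ card {a\<in>A. a < v} * (-1) ^ card {u\<in>H. u < v} * b (insert v (A \<union> H))"
      unfolding t_def card_less_Un[OF fA fH AHd] power_add ..
    ultimately show "shuffle_sign A H * t v = (-1) ^ card {u\<in>H. u < v} * slice W A b (insert v H)"
      by (simp only: mult_ac)
  qed
  also have "\<dots> = bdry (wlink X W A) (slice W A b) H"
  proof -
    have "H \<in> wlink X W A" using HW AH by (simp add: wlink_def)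
    then show ?thesis unfolding bdry_def V1_def by (rule if_P[symmetric])
  qed
  finally have "shuffle_sign A H * bdry X b (A \<union> H)
      = bdry (wlink X W A) (slice W A b) H + (\<Sum>v\<in>V2. shuffle_sign A H * t v)"
    using split by (simp only:)
  then show ?thesis unfolding V2_def t_def by (simp only: mult.assoc)
qed

locale cycle_lift =
  fixes D :: "nat set set" and W W' :: "nat set" and L :: "nat set set"
    and i p :: nat and z :: "nat set \<Rightarrow> 'k::field"
  assumes D_closed: "\<forall>F\<in>D. \<forall>G\<subseteq>F. G \<in> D"
    and finite_W: "finite W" and finite_W': "finite W'" and disjoint: "W' \<inter> W = {}"
    and card_W': "card W' = i" and two_le_i: "2 \<le> i"
    and finite_L: "finite L" and L_sub: "L \<subseteq> Pow W"
    and wlink_sub_L: "\<And>A. A \<subseteq> W' \<Longrightarrow> A \<noteq> {} \<Longrightarrow> wlink D W A \<subseteq> L"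
    and z_chain: "z \<in> chains L (int p - 1)" and z_cycle: "bdry L z = (\<lambda>_. 0)"
    and z_support: "\<And>G H. G \<subseteq> W' \<Longrightarrow> card G = i - 1 \<Longrightarrow> z H \<noteq> 0 \<Longrightarrow> G \<union> H \<in> D"
    and z_not_boundary: "\<not> (\<exists>b\<in>chains L (int p). bdry L b = z)"
    and top_cycles_bound: "\<And>c::nat set \<Rightarrow> 'k. c \<in> chains (wlink D W W') (int p - 1) \<Longrightarrow>
        bdry (wlink D W W') c = (\<lambda>_. 0) \<Longrightarrow> \<exists>e\<in>chains L (int p). bdry L e = c"
begin

definition X :: "nat set set" where
  "X = induced D (W' \<union> W)"

text \<open>\<open>\<tau>(B)\<close> is the sign of the complement \<open>W' - B\<close> inside \<open>W'\<close>; it makes the transverse boundary terms of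
  the lifted chain cancel in pairs.\<close>

definition tau :: "nat set \<Rightarrow> 'k" where
  "tau B = (-1) ^ (\<Sum>x\<in>W' - B. card {u\<in>W'. u < x})"

definition lift :: "nat set \<Rightarrow> 'k" where
  "lift F = (if F \<subseteq> W' \<union> W \<and> card (F \<inter> W') = i - 1
     then tau (F \<inter> W') * shuffle_sign (F \<inter> W') (F \<inter> W) * z (F \<inter> W) else 0)"

lemma tau_square [simp]: "tau B * tau B = 1"
  by (simp add: tau_def)

lemma X_sub: "X \<subseteq> Pow (W' \<union> W)" and X_sub_D: "X \<subseteq> D"
  by (auto simp: X_def induced_def)

lemma wlink_X: "A \<subseteq> W' \<Longrightarrow> wlink X W A = wlink D W A"
  by (auto simp: wlink_def X_def induced_def)

lemma wlink_D_closed: "\<forall>F\<in>wlink D W A. \<forall>G\<subseteq>F. G \<in> wlink D W A"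
  by (rule wlink_closed[OF D_closed])

lemma z_face: "z H \<noteq> 0 \<Longrightarrow> H \<in> L \<and> card H = p"
  using z_chain by (auto simp: chains_def)

lemma z_sub_W: "z H \<noteq> 0 \<Longrightarrow> H \<subseteq> W"
  using z_face L_sub by auto

lemma lift_split:
  assumes "A \<subseteq> W'" "H \<subseteq> W"
  shows "lift (A \<union> H) = (if card A = i - 1 then tau A * shuffle_sign A H * z H else 0)"
proof -
  have "(A \<union> H) \<inter> W' = A" "(A \<union> H) \<inter> W = H" "A \<union> H \<subseteq> W' \<union> W"
    using assms disjoint by auto
  then show ?thesis by (simp add: lift_def)
qed

lemma lift_chain: "lift \<in> chains X (int p + int i - 2)"
  unfolding chains_def
proof (intro CollectI allI impI)
  fix F assume "lift F \<noteq> 0"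
  then have F: "F \<subseteq> W' \<union> W" "card (F \<inter> W') = i - 1" "z (F \<inter> W) \<noteq> 0"
    by (auto simp: lift_def split: if_splits)
  have FF: "F = (F \<inter> W') \<union> (F \<inter> W)" using F(1) by auto
  then have "F \<in> D" using z_support F by (metis inf_le2)
  have "card F = card (F \<inter> W') + card (F \<inter> W)"
    by (subst FF, rule card_Un_disjoint) (use finite_W finite_W' disjoint in auto)
  then have "card F = i - 1 + p" using F z_face by simp
  then show "F \<in> X \<and> int (card F) = int p + int i - 2 + 1"
    using \<open>F \<in> D\<close> F(1) two_le_i by (auto simp: X_def induced_def)
qed

lemma lift_support: "\<forall>F. lift F \<noteq> 0 \<longrightarrow> F \<in> X"
  using lift_chain by (auto simp: chains_def)

lemma slice_lift:
  assumes "A \<subseteq> W'"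
  shows "slice W A lift = (\<lambda>H. if card A = i - 1 then tau A * z H else 0)"
proof
  fix H
  show "slice W A lift H = (if card A = i - 1 then tau A * z H else 0)"
  proof (cases "H \<subseteq> W")
    case True
    then show ?thesis
      using lift_split[OF assms True] by (simp add: slice_def mult.left_commute)
  next
    case False
    then show ?thesis using z_sub_W by (auto simp: slice_def)
  qed
qed

lemma z_chain_wlink:
  assumes "A \<subseteq> W'" "card A = i - 1"
  shows "z \<in> chains (wlink D W A) (int p - 1)"
  using assms z_support z_sub_W z_face by (auto simp: chains_def wlink_def)

text \<open>The slice part of the boundary of the lifted chain vanishes because \<open>z\<close> is a cycle.\<close>

lemma fiber_term_zero:
  assumes A: "A \<subseteq> W'"
  shows "bdry (wlink X W A) (slice W A lift) H = 0"
proof (cases "card A = i - 1")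
  case True
  then have "A \<noteq> {}" using two_le_i by auto
  then have "bdry (wlink D W A) z = bdry L z"
    using bdry_mono[OF wlink_sub_L[OF A] finite_L wlink_D_closed z_chain_wlink[OF A True]] by simp
  then show ?thesis
    using True z_cycle by (simp add: slice_lift[OF A] wlink_X[OF A] bdry_scale)
next
  case False
  then show ?thesis by (simp add: slice_lift[OF A] bdry_zero)
qed

lemma transverse_term:
  assumes A: "A \<subseteq> W'" and H: "H \<subseteq> W" and cA: "card A = i - 2"
    and y: "y \<in> W' - A" and y': "W' - insert y A = {y'}"
  shows "shuffle_sign A H * (-1) ^ card {u\<in>A \<union> H. u < y} * lift (insert y (A \<union> H))
       = (-1) ^ card {u\<in>A. u < y} * (-1) ^ card H * (-1) ^ card {u\<in>W'. u < y'} * z H"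
proof -
  have fA: "finite A" and fH: "finite H" using A H finite_W finite_W' finite_subset by blast+
  have yA: "y \<notin> A" and yH: "y \<notin> H" and AH: "A \<inter> H = {}" using y A H disjoint by auto
  have "card (insert y A) = i - 1" using cA fA y two_le_i by simp
  then have "lift (insert y (A \<union> H)) = tau (insert y A) * shuffle_sign (insert y A) H * z H"
    using lift_split[of "insert y A" H] y A H by simp
  moreover have "tau (insert y A) = (-1) ^ card {u\<in>W'. u < y'}" by (simp add: tau_def y')
  ultimately have "shuffle_sign A H * (-1) ^ card {u\<in>A \<union> H. u < y} * lift (insert y (A \<union> H))
      = (shuffle_sign A H * (-1) ^ card {u\<in>A \<union> H. u < y} * shuffle_sign (insert y A) H)
        * ((-1) ^ card {u\<in>W'. u < y'} * z H)"
    by (simp only: mult_ac)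
  also have "\<dots> = (-1) ^ card {u\<in>A. u < y} * (-1) ^ card H * ((-1) ^ card {u\<in>W'. u < y'} * z H)"
    by (simp only: shuffle_sign_move[OF fA fH AH yA yH])
  finally show ?thesis by (simp only: mult.assoc)
qed

text \<open>The transverse part of the boundary of the lifted chain vanishes: for \<open>|A| = i - 2\<close> the two
  cofaces \<open>A + a\<close>, \<open>A + b\<close> contribute opposite terms, for other \<open>A\<close> there are no contributions.\<close>

lemma transverse_term_zero:
  assumes A: "A \<subseteq> W'" and H: "H \<subseteq> W"
  shows "(\<Sum>y\<in>{y\<in>W' - A. insert y (A \<union> H) \<in> X}.
      shuffle_sign A H * (-1) ^ card {u\<in>A \<union> H. u < y} * lift (insert y (A \<union> H))) = 0"
    (is "(\<Sum>y\<in>_. ?t y) = 0")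
proof -
  have fA: "finite A" using A finite_W' finite_subset by blast
  have "(\<Sum>y\<in>{y\<in>W' - A. insert y (A \<union> H) \<in> X}. ?t y) = (\<Sum>y\<in>W' - A. ?t y)"
    by (rule sum.mono_neutral_left) (use finite_W' lift_support in auto)
  also have "\<dots> = 0"
  proof (cases "card A = i - 2")
    case False
    have "lift (insert y (A \<union> H)) = 0" if "y \<in> W' - A" for y
    proof -
      have "card (insert y A) \<noteq> i - 1" using that fA False two_le_i by simp
      then show ?thesis using lift_split[of "insert y A" H] that A H by simp
    qed
    then show ?thesis by simp
  next
    case True
    then have "card (W' - A) = 2" using card_W' A fA two_le_i by (simp add: card_Diff_subset)
    then obtain a b where ab: "W' - A = {a, b}" "a < b"
      by (metis card_2_iff insert_commute linorder_neqE_nat)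
    have "W' - insert a A = {b}" "W' - insert b A = {a}" using ab by auto
    then have ta: "?t a = (-1) ^ card {u\<in>A. u < a} * (-1) ^ card H * (-1) ^ card {u\<in>W'. u < b} * z H"
      and tb: "?t b = (-1) ^ card {u\<in>A. u < b} * (-1) ^ card H * (-1) ^ card {u\<in>W'. u < a} * z H"
      using transverse_term[OF A H True] ab by auto
    have "W' = A \<union> {a, b}" using ab A by auto
    then have "{u\<in>W'. u < b} = insert a {u\<in>A. u < b}" "{u\<in>W'. u < a} = {u\<in>A. u < a}"
      using ab by auto
    moreover have "a \<notin> A" using ab by auto
    ultimately have "card {u\<in>W'. u < b} = card {u\<in>A. u < b} + 1" "card {u\<in>W'. u < a} = card {u\<in>A. u < a}"
      using fA by simp_all
    then have "?t a + ?t b = 0" unfolding ta tb by (simp add: power_add mult_ac)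
    then show ?thesis using ab by simp
  qed
  finally show ?thesis .
qed

lemma lift_cycle: "bdry X lift = (\<lambda>_. 0)"
proof
  fix F
  show "bdry X lift F = 0"
  proof (cases "F \<in> X")
    case False
    then show ?thesis by (simp add: bdry_def)
  next
    case True
    define A H where "A = F \<inter> W'" and "H = F \<inter> W"
    have F: "F = A \<union> H" using True X_sub by (auto simp: A_def H_def)
    have A: "A \<subseteq> W'" and H: "H \<subseteq> W" by (auto simp: A_def H_def)
    have "shuffle_sign A H * bdry X lift (A \<union> H) = 0"
      using boundary_split[where b=lift, OF finite_W finite_W' X_sub disjoint A H] True F
        fiber_term_zero[OF A] transverse_term_zero[OF A H] by simp
    moreover have "shuffle_sign A H \<noteq> (0::'k)" by (rule shuffle_sign_nonzero)
    ultimately show ?thesis using F by simp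
  qed
qed

text \<open>Suppose a chain \<open>b\<close> bounds the lifted cycle.  Slicing \<open>b\<close> shows that \<open>z\<close> then bounds in \<open>L\<close>.\<close>

context
  fixes b :: "nat set \<Rightarrow> 'k"
  assumes b_chain: "b \<in> chains X (int p + int i - 2 + 1)" and b_bdry: "bdry X b = lift"
begin

lemma b_face: "b F \<noteq> 0 \<Longrightarrow> F \<in> X \<and> card F = p + i"
  using b_chain two_le_i by (auto simp: chains_def)

lemma card_W'_Un: "H \<subseteq> W \<Longrightarrow> card (W' \<union> H) = i + card H"
  using card_W' finite_W' finite_W disjoint
  by (metis card_Un_disjoint disjoint_iff finite_subset subsetD)

lemma top_slice_chain: "slice W W' b \<in> chains (wlink D W W') (int p - 1)"
  unfolding chains_def
proof (intro CollectI allI impI)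
  fix H assume "slice W W' b H \<noteq> 0"
  then have H: "H \<subseteq> W" and "b (W' \<union> H) \<noteq> 0" by (auto simp: slice_def split: if_splits)
  then have "W' \<union> H \<in> X" "card (W' \<union> H) = p + i" using b_face by auto
  then show "H \<in> wlink D W W' \<and> int (card H) = int p - 1 + 1"
    using H X_sub_D card_W'_Un[OF H] by (auto simp: wlink_def)
qed

lemma top_slice_cycle: "bdry (wlink D W W') (slice W W' b) = (\<lambda>_. 0)"
proof
  fix H
  show "bdry (wlink D W W') (slice W W' b) H = 0"
  proof (cases "H \<in> wlink D W W'")
    case False
    then show ?thesis by (simp add: bdry_def)
  next
    case True
    then have H: "H \<subseteq> W" and "W' \<union> H \<in> X" by (auto simp: wlink_def X_def induced_def)
    moreover have "card W' \<noteq> i - 1" using card_W' two_le_i by simp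
    then have "lift (W' \<union> H) = 0" using lift_split[OF subset_refl H] by simp
    ultimately show ?thesis
      using boundary_split[where b=b, OF finite_W finite_W' X_sub disjoint subset_refl H] b_bdry
      by (simp add: wlink_X)
  qed
qed

lemma slice_chain:
  assumes x: "x \<in> W'"
  shows "slice W (W' - {x}) b \<in> chains (wlink D W (W' - {x})) (int p)"
  unfolding chains_def
proof (intro CollectI allI impI)
  fix H assume "slice W (W' - {x}) b H \<noteq> 0"
  then have H: "H \<subseteq> W" and "b ((W' - {x}) \<union> H) \<noteq> 0" by (auto simp: slice_def split: if_splits)
  then have GX: "(W' - {x}) \<union> H \<in> X" and cGH: "card ((W' - {x}) \<union> H) = p + i" using b_face by auto
  have "card ((W' - {x}) \<union> H) = card (W' - {x}) + card H"
    by (rule card_Un_disjoint) (use finite_W' finite_W H disjoint finite_subset in auto)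
  then have "card H = p + 1" using cGH card_W' x two_le_i by simp
  then show "H \<in> wlink D W (W' - {x}) \<and> int (card H) = int p + 1"
    using H X_sub_D GX by (auto simp: wlink_def)
qed

lemma top_transverse_sum:
  assumes x: "x \<in> W'" and H: "H \<subseteq> W"
  defines "G \<equiv> W' - {x}"
  shows "(\<Sum>y\<in>{y\<in>W' - G. insert y (G \<union> H) \<in> X}.
          shuffle_sign G H * (-1) ^ card {u\<in>G \<union> H. u < y} * b (insert y (G \<union> H)))
       = (-1) ^ card {u\<in>G. u < x} * (-1) ^ p * slice W W' b H"
proof -
  have WG: "W' - G = {x}" and W'G: "W' = insert x G" and xG: "x \<notin> G" using x by (auto simp: G_def)
  have ins: "insert x (G \<union> H) = W' \<union> H" using W'G by simp
  have fG: "finite G" and fH: "finite H" using finite_W' finite_W H by (auto simp: G_def intro: finite_subset)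
  have GH: "G \<inter> H = {}" and xH: "x \<notin> H" using x H disjoint by (auto simp: G_def)
  have bW: "b (W' \<union> H) = shuffle_sign W' H * slice W W' b H"
    using H by (simp add: slice_def flip: mult.assoc)
  show ?thesis
  proof (cases "b (W' \<union> H) = 0")
    case True
    then show ?thesis using bW ins shuffle_sign_nonzero[of W' H] WG by auto
  next
    case False
    then have "W' \<union> H \<in> X" "card H = p" using b_face card_W'_Un[OF H] by auto
    then have "{y\<in>W' - G. insert y (G \<union> H) \<in> X} = {x}" using WG ins by auto
    then have "(\<Sum>y\<in>{y\<in>W' - G. insert y (G \<union> H) \<in> X}.
          shuffle_sign G H * (-1) ^ card {u\<in>G \<union> H. u < y} * b (insert y (G \<union> H)))
        = (shuffle_sign G H * (-1) ^ card {u\<in>G \<union> H. u < x} * shuffle_sign (insert x G) H) * slice W W' b H"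
      using ins bW W'G by (simp add: mult_ac)
    also have "\<dots> = (-1) ^ card {u\<in>G. u < x} * (-1) ^ p * slice W W' b H"
      by (simp only: shuffle_sign_move[OF fG fH GH xG xH] \<open>card H = p\<close>)
    finally show ?thesis .
  qed
qed

lemma slice_relation:
  assumes x: "x \<in> W'"
  defines "G \<equiv> W' - {x}"
  shows "tau G * z H = bdry (wlink D W G) (slice W G b) H
    + (-1) ^ card {u\<in>G. u < x} * (-1) ^ p * slice W W' b H"
proof -
  have GW': "G \<subseteq> W'" and cG: "card G = i - 1" using x finite_W' card_W' by (auto simp: G_def)
  show ?thesis
  proof (cases "H \<in> wlink D W G")
    case True
    then have H: "H \<subseteq> W" and GHX: "G \<union> H \<in> X" using GW' by (auto simp: wlink_def X_def induced_def)
    have "lift (G \<union> H) = tau G * shuffle_sign G H * z H" using lift_split[OF GW' H] cG by simp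
    then have "shuffle_sign G H * bdry X b (G \<union> H)
        = (shuffle_sign G H * shuffle_sign G H) * (tau G * z H)"
      using b_bdry by (simp only: mult_ac)
    then have "shuffle_sign G H * bdry X b (G \<union> H) = tau G * z H" by simp
    then show ?thesis
      using boundary_split[where b=b, OF finite_W finite_W' X_sub disjoint GW' H GHX]
        top_transverse_sum[OF x H] wlink_X[OF GW'] by (simp add: G_def)
  next
    case False
    have "z H = 0"
      using False z_support[OF GW' cG] z_sub_W by (auto simp: wlink_def)
    moreover have "slice W W' b H = 0"
    proof (rule ccontr)
      assume "slice W W' b H \<noteq> 0"
      then have "H \<in> wlink D W W'" using top_slice_chain by (auto simp: chains_def)
      then show False using False wlink_antimono[OF D_closed GW'] by blast
    qed
    ultimately show ?thesis using False by (simp add: bdry_def)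
  qed
qed

text \<open>Hence \<open>z\<close> bounds in \<open>L\<close>: the slice over \<open>W'\<close> bounds some \<open>e\<close> in \<open>L\<close>, and
  \<open>\<tau>(G) \<cdot> (slice of b over G \<plusminus> e)\<close> is a \<open>p\<close>-chain of \<open>L\<close> with boundary \<open>z\<close>.\<close>

lemma z_bounds: "\<exists>f\<in>chains L (int p). bdry L f = z"
proof -
  obtain e where e: "e \<in> chains L (int p)" and be: "bdry L e = slice W W' b"
    using top_cycles_bound[OF top_slice_chain top_slice_cycle] by blast
  obtain x where x: "x \<in> W'" using card_W' two_le_i by fastforce
  define G where "G = W' - {x}"
  define \<epsilon> :: 'k where "\<epsilon> = (-1) ^ card {u\<in>G. u < x} * (-1) ^ p"
  have GW': "G \<subseteq> W'" by (auto simp: G_def)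
  have "card G = i - 1" using x card_W' finite_W' by (simp add: G_def)
  then have "G \<noteq> {}" using two_le_i by auto
  with GW' have GL: "wlink D W G \<subseteq> L" by (rule wlink_sub_L)
  have g: "slice W G b \<in> chains (wlink D W G) (int p)" using slice_chain[OF x] by (simp add: G_def)
  have bg: "bdry (wlink D W G) (slice W G b) = bdry L (slice W G b)"
    by (rule bdry_mono[OF GL finite_L wlink_D_closed g])
  define f where "f F = tau G * slice W G b F + (tau G * \<epsilon>) * e F" for F
  have "f \<in> chains L (int p)"
    unfolding f_def by (rule chains_linear[OF _ e]) (use chains_mono[OF GL] g in blast)
  moreover have "bdry L f = z"
  proof
    fix H
    have "bdry L f H = tau G * (bdry (wlink D W G) (slice W G b) H + \<epsilon> * slice W W' b H)"
      unfolding f_def bdry_linear bg be by (simp add: distrib_left mult.assoc)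
    also have "\<dots> = tau G * (tau G * z H)"
      using slice_relation[OF x] by (simp add: G_def \<epsilon>_def)
    finally show "bdry L f H = z H" by (simp flip: mult.assoc)
  qed
  ultimately show ?thesis by blast
qed

end

lemma lift_not_boundary: "\<not> (\<exists>b\<in>chains X (int p + int i - 2 + 1). bdry X b = lift)"
  using z_bounds z_not_boundary by blast

theorem lift_nonbounding_cycle:
  "reduced_homology_nonzero TYPE('k) (induced D (W' \<union> W)) (int p + int i - 2)"
  unfolding reduced_homology_nonzero_def X_def[symmetric]
  using lift_chain lift_cycle lift_not_boundary by blast

end

definition homogeneous :: "'a set \<Rightarrow> nat set \<Rightarrow> ('a set \<Rightarrow> 'b) \<Rightarrow> bool" where
  "homogeneous S K f \<longleftrightarrow>
     (\<forall>G1 G2. G1 \<subseteq> S \<longrightarrow> G2 \<subseteq> S \<longrightarrow> card G1 = card G2 \<longrightarrow> card G1 \<in> K \<longrightarrow> f G1 = f G2)"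

lemma homogeneous_subset: "homogeneous S K f \<Longrightarrow> S' \<subseteq> S \<Longrightarrow> homogeneous S' K f"
  unfolding homogeneous_def by blast

lemma homogeneous_Un: "homogeneous S K f \<Longrightarrow> homogeneous S K' f \<Longrightarrow> homogeneous S (K \<union> K') f"
  unfolding homogeneous_def by blast

lemma ramsey_single_size:
  "\<exists>N. \<forall>(U::'a set) (f::'a set \<Rightarrow> 'b) C. finite U \<longrightarrow> N \<le> card U \<longrightarrow> finite C \<longrightarrow> card C \<le> c \<longrightarrow>
     (\<forall>G\<subseteq>U. card G = r \<longrightarrow> f G \<in> C) \<longrightarrow> (\<exists>S\<subseteq>U. card S = m \<and> homogeneous S {r} f)"
proof -
  obtain N :: nat where N: "partn_lst {..<N} (replicate c m) r" using ramsey_full by blast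
  have "\<exists>S\<subseteq>U. card S = m \<and> homogeneous S {r} f"
    if U: "finite U" "N \<le> card U" and C: "finite C" "card C \<le> c" and fC: "\<forall>G\<subseteq>U. card G = r \<longrightarrow> f G \<in> C"
    for U :: "'a set" and f :: "'a set \<Rightarrow> 'b" and C
  proof -
    obtain U' where U': "U' \<subseteq> U" "card U' = N" using U(2) by (meson obtain_subset_with_card_n)
    have "finite U'" using U'(1) U(1) by (rule finite_subset)
    then obtain g where g: "bij_betw g {..<N} U'"
      using ex_bij_betw_nat_finite[of U'] U'(2) by (auto simp: lessThan_atLeast0)
    then have g_inj: "inj_on g {..<N}" and g_im: "g ` {..<N} = U'" by (auto simp: bij_betw_def)
    obtain h where h: "bij_betw h C {0..<card C}" using ex_bij_betw_finite_nat[OF C(1)] by blast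
    define col where "col G = h (f (g ` G))" for G
    have col: "col \<in> [{..<N}]\<^bsup>r\<^esup> \<rightarrow> {..<length (replicate c m)}"
    proof
      fix G assume "G \<in> [{..<N}]\<^bsup>r\<^esup>"
      then have G: "G \<subseteq> {..<N}" "finite G" "card G = r" by (auto simp: nsets_def)
      then have "card (g ` G) = r" using inj_on_subset[OF g_inj G(1)] by (simp add: card_image)
      moreover have "g ` G \<subseteq> U" using G g_im U' by auto
      ultimately have "f (g ` G) \<in> C" using fC by blast
      then have "h (f (g ` G)) < card C" using h by (auto simp: bij_betw_def)
      then show "col G \<in> {..<length (replicate c m)}" using C(2) by (simp add: col_def)
    qed
    obtain j H where j: "j < length (replicate c m)" and H: "H \<in> nsets {..<N} (replicate c m ! j)"
      and mono: "col ` [H]\<^bsup>r\<^esup> \<subseteq> {j}" by (rule partn_lstE[OF N col refl])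
    have HN: "H \<subseteq> {..<N}" and cH: "card H = m" using H j by (auto simp: nsets_def)
    have inj: "inj_on g H" using inj_on_subset[OF g_inj HN] .
    have S: "g ` H \<subseteq> U" "card (g ` H) = m"
      using HN g_im U' cH inj by (auto simp: card_image)
    have colour: "h (f G) = j" if "G \<subseteq> g ` H" "card G = r" for G
    proof -
      have "finite H" using HN finite_subset by blast
      then have "G \<in> [g ` H]\<^bsup>r\<^esup>" using that by (auto simp: nsets_def intro: finite_subset)
      then obtain Y where "Y \<in> [H]\<^bsup>r\<^esup>" "G = g ` Y" using nset_image_obtains[OF _ inj] by metis
      then show ?thesis using mono by (auto simp: col_def)
    qed
    have "homogeneous (g ` H) {r} f"
      unfolding homogeneous_def
    proof (intro allI impI)
      fix G1 G2 assume "G1 \<subseteq> g ` H" "G2 \<subseteq> g ` H" "card G1 = card G2" "card G1 \<in> {r}"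
      then have "f G1 \<in> C" "f G2 \<in> C" "h (f G1) = h (f G2)" using fC S(1) colour by auto
      then show "f G1 = f G2" using h by (auto simp: bij_betw_def dest: inj_onD)
    qed
    then show ?thesis using S by blast
  qed
  then show ?thesis by blast
qed

lemma ramsey_all_sizes:
  "\<exists>N. \<forall>(U::'a set) (f::'a set \<Rightarrow> 'b) C. finite U \<longrightarrow> N \<le> card U \<longrightarrow> finite C \<longrightarrow> card C \<le> c \<longrightarrow>
     (\<forall>G\<subseteq>U. f G \<in> C) \<longrightarrow> (\<exists>S\<subseteq>U. card S = m \<and> homogeneous S {1..D} f)"
proof (induction D arbitrary: m)
  case 0
  have "\<exists>S\<subseteq>U. card S = m \<and> homogeneous S {1..0} f" if mU: "m \<le> card U" for U :: "'a set" and f :: "'a set \<Rightarrow> 'b"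
  proof -
    obtain S where "S \<subseteq> U" "card S = m" using obtain_subset_with_card_n[OF mU] by blast
    then show ?thesis by (auto simp: homogeneous_def)
  qed
  then show ?case by blast
next
  case (Suc D)
  obtain N1 where N1: "\<forall>(U::'a set) (f::'a set \<Rightarrow> 'b) C. finite U \<longrightarrow> N1 \<le> card U \<longrightarrow> finite C \<longrightarrow>
      card C \<le> c \<longrightarrow> (\<forall>G\<subseteq>U. card G = Suc D \<longrightarrow> f G \<in> C) \<longrightarrow> (\<exists>S\<subseteq>U. card S = m \<and> homogeneous S {Suc D} f)"
    using ramsey_single_size[where c=c and r="Suc D" and m=m] by blast
  obtain N where N: "\<forall>(U::'a set) (f::'a set \<Rightarrow> 'b) C. finite U \<longrightarrow> N \<le> card U \<longrightarrow> finite C \<longrightarrow>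
      card C \<le> c \<longrightarrow> (\<forall>G\<subseteq>U. f G \<in> C) \<longrightarrow> (\<exists>S\<subseteq>U. card S = N1 \<and> homogeneous S {1..D} f)"
    using Suc.IH[of N1] by blast
  have "\<exists>S\<subseteq>U. card S = m \<and> homogeneous S {1..Suc D} f"
    if U: "finite U" "N \<le> card U" and C: "finite C" "card C \<le> c" and fC: "\<forall>G\<subseteq>U. f G \<in> C"
    for U :: "'a set" and f :: "'a set \<Rightarrow> 'b" and C
  proof -
    obtain S1 where S1: "S1 \<subseteq> U" "card S1 = N1" "homogeneous S1 {1..D} f"
      using N[rule_format, OF U C] fC by blast
    have "finite S1" using S1(1) U(1) by (rule finite_subset)
    moreover have "\<forall>G\<subseteq>S1. card G = Suc D \<longrightarrow> f G \<in> C" using fC S1(1) by blast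
    ultimately obtain S where S: "S \<subseteq> S1" "card S = m" "homogeneous S {Suc D} f"
      using N1[rule_format, where U=S1 and f=f and C=C] C S1(2) by blast
    have "homogeneous S ({1..D} \<union> {Suc D}) f"
      using homogeneous_Un[OF homogeneous_subset[OF S1(3) S(1)] S(3)] .
    moreover have "{1..D} \<union> {Suc D} = {1..Suc D}" by auto
    ultimately show ?thesis using S S1 by auto
  qed
  then show ?case by blast
qed

definition nonbounding_cycle :: "'k::field itself \<Rightarrow> nat set set \<Rightarrow> nat set set \<Rightarrow> int \<Rightarrow> bool" where
  "nonbounding_cycle K A L j \<longleftrightarrow> (\<exists>z::nat set \<Rightarrow> 'k. z \<in> chains A j \<and> bdry A z = (\<lambda>_. 0)
     \<and> \<not> (\<exists>b\<in>chains L (j + 1). bdry L b = z))"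

lemma reduced_homology_nonzero_iff:
  "reduced_homology_nonzero K A j \<longleftrightarrow> nonbounding_cycle K A A j"
  by (simp add: reduced_homology_nonzero_def nonbounding_cycle_def)

lemma no_nonbounding_cycle_empty: "\<not> nonbounding_cycle TYPE('k::field) {} L j"
proof -
  have "(\<lambda>_. 0::'k) \<in> chains L (j + 1)" "bdry L (\<lambda>_. 0::'k) = (\<lambda>_. 0)"
    by (simp_all add: chains_def bdry_zero)
  moreover have "z = (\<lambda>_. 0)" if "z \<in> chains {} j" for z :: "nat set \<Rightarrow> 'k"
    using that by (auto simp: chains_def)
  ultimately show ?thesis unfolding nonbounding_cycle_def by blast
qed

lemma wlink_above_dim:
  assumes "simplicial_complex D" "\<forall>F\<in>D. card F \<le> d" "finite G" "d < card G"
  shows "wlink D W G = {}"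
proof (rule ccontr)
  assume "wlink D W G \<noteq> {}"
  then obtain H where "G \<union> H \<in> D" by (auto simp: wlink_def)
  moreover from this have "finite (G \<union> H)" using assms(1) by (simp add: simplicial_complex_def)
  ultimately have "card G \<le> d" using assms(2) by (meson card_mono le_trans sup_ge1)
  then show False using assms(4) by simp
qed

lemma threshold_exists:
  assumes "P (1::nat)" "\<not> P (Suc d)"
  shows "\<exists>j. 1 \<le> j \<and> j \<le> d \<and> P j \<and> \<not> P (Suc j)"
  using assms
proof (induction d)
  case (Suc d)
  then show ?case by (cases "P (Suc d)") (auto intro: le_SucI)
qed simp

text \<open>On a homogeneous set \<open>S\<close> of a complex of dimension \<open>< d\<close> the restricted link of \<open>G \<subseteq> S\<close> depends
  only on \<open>|G|\<close> for all sizes \<open>\<ge> 1\<close>: above \<open>d\<close> all these links are empty.\<close>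

lemma homogeneous_wlink:
  assumes sc: "simplicial_complex D" and dim: "\<forall>F\<in>D. card F \<le> d" and fS: "finite S"
    and hom: "homogeneous S {1..d} (wlink D W)"
    and G: "G1 \<subseteq> S" "G2 \<subseteq> S" "card G1 = card G2" "1 \<le> card G1"
  shows "wlink D W G1 = wlink D W G2"
proof (cases "card G1 \<le> d")
  case True
  then have "card G1 \<in> {1..d}" using G(4) by simp
  then show ?thesis using hom G(1-3) unfolding homogeneous_def by blast
next
  case False
  have "finite G1" "finite G2" using G(1,2) fS by (auto intro: finite_subset)
  then show ?thesis using wlink_above_dim[OF sc dim] False G(3) by simp
qed

lemma lifting_step:
  fixes D :: "nat set set"
  assumes closed: "\<forall>F\<in>D. \<forall>G\<subseteq>F. G \<in> D" and fW: "finite W" and fL: "finite L" and LW: "L \<subseteq> Pow W"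
    and W': "finite W'" "W' \<inter> W = {}" "card W' = Suc j" and j: "1 \<le> j"
    and sub_L: "\<And>A. A \<subseteq> W' \<Longrightarrow> A \<noteq> {} \<Longrightarrow> wlink D W A \<subseteq> L"
    and same: "\<And>G. G \<subseteq> W' \<Longrightarrow> card G = j \<Longrightarrow> wlink D W G = K"
    and escape: "nonbounding_cycle TYPE('k::field) K L (int p - 1)"
    and top: "\<not> nonbounding_cycle TYPE('k) (wlink D W W') L (int p - 1)"
  shows "reduced_homology_nonzero TYPE('k) (induced D (W' \<union> W)) (int p + int (Suc j) - 2)"
proof -
  obtain z :: "nat set \<Rightarrow> 'k" where z: "z \<in> chains K (int p - 1)" "bdry K z = (\<lambda>_. 0)"
      "\<not> (\<exists>b\<in>chains L (int p). bdry L b = z)"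
    using escape unfolding nonbounding_cycle_def by auto
  obtain G where G: "G \<subseteq> W'" "card G = j" using obtain_subset_with_card_n[of j W'] W'(3) by auto
  then have "G \<noteq> {}" using j by auto
  then have KL: "K \<subseteq> L" using sub_L G same by blast
  have K_closed: "\<forall>F\<in>K. \<forall>H\<subseteq>F. H \<in> K" using wlink_closed[OF closed] same[OF G] by blast
  interpret cycle_lift D W W' L "Suc j" p z
  proof
    show "\<forall>F\<in>D. \<forall>G\<subseteq>F. G \<in> D" "finite W" "finite L" "L \<subseteq> Pow W" "finite W'" "W' \<inter> W = {}"
      "card W' = Suc j" "2 \<le> Suc j"
      using closed fW fL LW W' j by auto
    show "wlink D W A \<subseteq> L" if "A \<subseteq> W'" "A \<noteq> {}" for A using sub_L that .
    show "z \<in> chains L (int p - 1)" using chains_mono[OF KL] z(1) by blast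
    show "bdry L z = (\<lambda>_. 0)" using bdry_mono[OF KL fL K_closed z(1)] z(2) by simp
    show "G \<union> H \<in> D" if "G \<subseteq> W'" "card G = Suc j - 1" "z H \<noteq> 0" for G H
      using same[of G] that z(1) by (auto simp: chains_def wlink_def)
    show "\<not> (\<exists>b\<in>chains L (int p). bdry L b = z)" by (rule z(3))
    show "\<exists>e\<in>chains L (int p). bdry L e = c"
      if "c \<in> chains (wlink D W W') (int p - 1)" "bdry (wlink D W W') c = (\<lambda>_. 0)" for c :: "nat set \<Rightarrow> 'k"
      using top that unfolding nonbounding_cycle_def by simp
  qed
  show ?thesis by (rule lift_nonbounding_cycle)
qed

text \<open>All these links lie in \<open>L = lk(v\<^sub>0)[W]\<close>.  Take the largest \<open>j\<close> such that some \<open>(p-1)\<close>-cycle of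
  the links of \<open>j\<close>-sets does not bound in \<open>L\<close>; the lifting step applied to a \<open>(j+1)\<close>-subset \<open>W'\<close>
  of \<open>S\<close> gives nonzero \<open>(p+j-1)\<close>-homology of \<open>D[W' \<union> W]\<close>.\<close>

lemma homogeneous_set_cycle:
  fixes D :: "nat set set"
  assumes sc: "simplicial_complex D" and dim: "\<forall>F\<in>D. card F \<le> d"
    and fW: "finite W" and fS: "finite S" and SW: "S \<inter> W = {}" and cS: "card S = d + 1"
    and hom: "homogeneous S {1..d} (wlink D W)"
    and hyp: "\<forall>v\<in>S. reduced_homology_nonzero TYPE('k::field) (induced (lk D {v}) W) (int p - 1)"
  shows "\<exists>W'\<subseteq>S. 2 \<le> card W' \<and>
    reduced_homology_nonzero TYPE('k) (induced D (W' \<union> W)) (int p + int (card W') - 2)"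
proof -
  have closed: "\<forall>F\<in>D. \<forall>G\<subseteq>F. G \<in> D" using sc by (simp add: simplicial_complex_def)
  note same_link = homogeneous_wlink[OF sc dim fS hom]
  obtain v0 where v0: "v0 \<in> S" using cS by fastforce
  define L where "L = wlink D W {v0}"
  have sub_L: "wlink D W A \<subseteq> L" if A: "A \<subseteq> S" "A \<noteq> {}" for A
  proof -
    obtain a where a: "a \<in> A" using A(2) by blast
    then have "wlink D W A \<subseteq> wlink D W {a}" using wlink_antimono[OF closed] by simp
    also have "\<dots> = L" using same_link[of "{a}" "{v0}"] a v0 A(1) by (auto simp: L_def)
    finally show ?thesis .
  qed
  define P where "P j \<longleftrightarrow> (\<exists>G\<subseteq>S. card G = j \<and> nonbounding_cycle TYPE('k) (wlink D W G) L (int p - 1))"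
    for j
  have "P 1"
  proof -
    have v0W: "v0 \<notin> W" using v0 SW by auto
    have "reduced_homology_nonzero TYPE('k) L (int p - 1)"
      using hyp[rule_format, OF v0] wlink_vertex[OF v0W, of D] by (simp add: L_def)
    then have "nonbounding_cycle TYPE('k) (wlink D W {v0}) L (int p - 1)"
      by (simp add: reduced_homology_nonzero_iff L_def)
    then show ?thesis using v0 unfolding P_def by (intro exI[of _ "{v0}"]) auto
  qed
  moreover have "\<not> P (Suc d)"
  proof
    assume "P (Suc d)"
    then obtain G where "G \<subseteq> S" "card G = Suc d"
      and G: "nonbounding_cycle TYPE('k) (wlink D W G) L (int p - 1)" by (auto simp: P_def)
    then have "wlink D W G = {}" using wlink_above_dim[OF sc dim] fS by (simp add: finite_subset)
    then show False using G no_nonbounding_cycle_empty by metis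
  qed
  ultimately obtain j where j: "1 \<le> j" "j \<le> d" "P j" "\<not> P (Suc j)"
    using threshold_exists[of P d] by blast
  obtain G1 where G1: "G1 \<subseteq> S" "card G1 = j"
    and escape: "nonbounding_cycle TYPE('k) (wlink D W G1) L (int p - 1)"
    using j(3) unfolding P_def by blast
  obtain W' where W': "W' \<subseteq> S" "card W' = Suc j"
    using obtain_subset_with_card_n[of "Suc j" S] cS j(2) by auto
  have "reduced_homology_nonzero TYPE('k) (induced D (W' \<union> W)) (int p + int (Suc j) - 2)"
  proof (rule lifting_step[OF closed fW _ _ _ _ W'(2) j(1) _ _ escape])
    show "finite L" "L \<subseteq> Pow W" using fW by (auto simp: L_def wlink_def intro: finite_subset[of _ "Pow W"])
    show "finite W'" "W' \<inter> W = {}" using W'(1) fS SW finite_subset by auto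
    show "wlink D W A \<subseteq> L" if "A \<subseteq> W'" "A \<noteq> {}" for A using sub_L that W'(1) by blast
    show "wlink D W G = wlink D W G1" if "G \<subseteq> W'" "card G = j" for G
      using same_link[of G G1] that W'(1) G1 j(1) by auto
    show "\<not> nonbounding_cycle TYPE('k) (wlink D W W') L (int p - 1)" using j(4) W' by (auto simp: P_def)
  qed
  then show ?thesis using W' j(1) by (intro exI[of _ W']) auto
qed

definition cycle_threshold :: "'k::field itself \<Rightarrow> nat \<Rightarrow> nat \<Rightarrow> nat \<Rightarrow> nat \<Rightarrow> bool" where
  "cycle_threshold K d w p R \<longleftrightarrow> (\<forall>(D::nat set set) W U.
     simplicial_complex D \<and> (\<forall>F\<in>D. card F \<le> d) \<and> finite W \<and> card W = w \<and>
     finite U \<and> U \<inter> W = {} \<and> R \<le> card U \<and>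
     (\<forall>v\<in>U. reduced_homology_nonzero K (induced (lk D {v}) W) (int p - 1)) \<longrightarrow>
     (\<exists>W'\<subseteq>U. 2 \<le> card W' \<and> reduced_homology_nonzero K (induced D (W' \<union> W)) (int p + int (card W') - 2)))"

lemma cycle_thresholdD:
  fixes D :: "nat set set"
  assumes "cycle_threshold K d w p R"
    and "simplicial_complex D" "\<forall>F\<in>D. card F \<le> d" "finite W" "card W = w"
    and "finite U" "U \<inter> W = {}" "R \<le> card U"
    and "\<forall>v\<in>U. reduced_homology_nonzero K (induced (lk D {v}) W) (int p - 1)"
  shows "\<exists>W'\<subseteq>U. 2 \<le> card W' \<and> reduced_homology_nonzero K (induced D (W' \<union> W)) (int p + int (card W') - 2)"
proof -
  note threshold = assms(1)[unfolded cycle_threshold_def, THEN spec[of _ D], THEN spec[of _ W], THEN spec[of _ U]]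
  show ?thesis by (rule mp[OF threshold]) (use assms(2-9) in simp)
qed

text \<open>Such a threshold exists: colour each \<open>G \<subseteq> U\<close> by its restricted link (one of at most \<open>2^2^w\<close> complexes
  on \<open>W\<close>); by Ramsey's theorem a large \<open>U\<close> contains a homogeneous \<open>(d+1)\<close>-set.\<close>

lemma cycle_threshold_exists: "\<exists>R. cycle_threshold TYPE('k::field) d w p R"
proof -
  obtain R where R: "\<forall>(U::nat set) (f::nat set \<Rightarrow> nat set set) C. finite U \<longrightarrow> R \<le> card U \<longrightarrow> finite C \<longrightarrow>
      card C \<le> 2 ^ 2 ^ w \<longrightarrow> (\<forall>G\<subseteq>U. f G \<in> C) \<longrightarrow> (\<exists>S\<subseteq>U. card S = d + 1 \<and> homogeneous S {1..d} f)"
    using ramsey_all_sizes[where c="2 ^ 2 ^ w" and m="d + 1" and D=d] by blast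
  have "\<exists>W'\<subseteq>U. 2 \<le> card W' \<and> reduced_homology_nonzero TYPE('k) (induced D (W' \<union> W)) (int p + int (card W') - 2)"
    if sc: "simplicial_complex D" and dim: "\<forall>F\<in>D. card F \<le> d" and fW: "finite W" and cW: "card W = w"
      and fU: "finite U" and UW: "U \<inter> W = {}" and RU: "R \<le> card U"
      and hyp: "\<forall>v\<in>U. reduced_homology_nonzero TYPE('k) (induced (lk D {v}) W) (int p - 1)"
    for D :: "nat set set" and W U
  proof -
    have "finite (Pow (Pow W))" "card (Pow (Pow W)) \<le> 2 ^ 2 ^ w" using fW cW by (simp_all add: card_Pow)
    moreover have "\<forall>G\<subseteq>U. wlink D W G \<in> Pow (Pow W)" by (auto simp: wlink_def)
    ultimately obtain S where S: "S \<subseteq> U" "card S = d + 1" "homogeneous S {1..d} (wlink D W)"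
      using R[rule_format, where U=U and f="wlink D W" and C="Pow (Pow W)"] fU RU by blast
    have "finite S" "S \<inter> W = {}" using S(1) fU UW finite_subset by auto
    then obtain W' where "W' \<subseteq> S" "2 \<le> card W'"
      "reduced_homology_nonzero TYPE('k) (induced D (W' \<union> W)) (int p + int (card W') - 2)"
      using homogeneous_set_cycle[OF sc dim fW _ _ S(2,3)] hyp S(1) by blast
    then show ?thesis using S(1) by blast
  qed
  then show ?thesis unfolding cycle_threshold_def by blast
qed

lemma card_supersets:
  assumes fT: "finite T" and WT: "W' \<subseteq> T" and cW: "card W' = i" and iR: "i \<le> R"
  shows "card {U. U \<subseteq> T \<and> card U = R \<and> W' \<subseteq> U} = (card T - i) choose (R - i)"
proof -
  have fW: "finite W'" using WT fT finite_subset by blast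
  have card_union: "card (V \<union> W') = R" if V: "V \<subseteq> T - W'" "card V = R - i" for V
  proof -
    have "card (V \<union> W') = card V + card W'"
      using V(1) fT fW by (intro card_Un_disjoint) (auto intro: finite_subset)
    then show ?thesis using V(2) cW iR by simp
  qed
  have "bij_betw (\<lambda>V. V \<union> W') {V. V \<subseteq> T - W' \<and> card V = R - i} {U. U \<subseteq> T \<and> card U = R \<and> W' \<subseteq> U}"
  proof (rule bij_betw_byWitness[where f'="\<lambda>U. U - W'"])
    show "(\<lambda>V. V \<union> W') ` {V. V \<subseteq> T - W' \<and> card V = R - i} \<subseteq> {U. U \<subseteq> T \<and> card U = R \<and> W' \<subseteq> U}"
      using card_union WT by auto
    show "(\<lambda>U. U - W') ` {U. U \<subseteq> T \<and> card U = R \<and> W' \<subseteq> U} \<subseteq> {V. V \<subseteq> T - W' \<and> card V = R - i}"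
      using cW fW by (auto simp: card_Diff_subset)
  qed auto
  then have "card {U. U \<subseteq> T \<and> card U = R \<and> W' \<subseteq> U} = card {V. V \<subseteq> T - W' \<and> card V = R - i}"
    by (simp add: bij_betw_same_card)
  also have "\<dots> = (card T - i) choose (R - i)"
    using fT WT fW cW by (simp add: n_subsets card_Diff_subset)
  finally show ?thesis .
qed

lemma pigeonhole_sum:
  fixes a :: "nat \<Rightarrow> nat"
  assumes "finite I" "I \<noteq> {}" "M \<le> (\<Sum>i\<in>I. a i)"
  shows "\<exists>i\<in>I. M \<le> card I * a i"
proof (rule ccontr)
  assume "\<not> (\<exists>i\<in>I. M \<le> card I * a i)"
  then have "(\<Sum>i\<in>I. card I * a i) < (\<Sum>i\<in>I. M)"
    using assms(1,2) by (intro sum_strict_mono) auto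
  then have "card I * (\<Sum>i\<in>I. a i) < card I * M" by (simp add: sum_distrib_left)
  then show False using assms(3) by (simp add: mult_le_mono2 leD)
qed

lemma cover_count:
  fixes P :: "nat \<Rightarrow> 'a set \<Rightarrow> bool"
  assumes fT: "finite T"
    and cover: "\<And>U. U \<subseteq> T \<Longrightarrow> card U = R \<Longrightarrow> \<exists>W'\<subseteq>U. 2 \<le> card W' \<and> P (card W') W'"
  shows "card T choose R
    \<le> (\<Sum>i\<in>{2..R}. card {W'. W' \<subseteq> T \<and> card W' = i \<and> P i W'} * ((card T - i) choose (R - i)))"
proof -
  define A where "A i = {W'. W' \<subseteq> T \<and> card W' = i \<and> P i W'}" for i
  define B where "B W' = {U. U \<subseteq> T \<and> card U = R \<and> W' \<subseteq> U}" for W'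
  have fA: "finite (A i)" for i using fT by (auto simp: A_def intro: finite_subset[of _ "Pow T"])
  have "{U. U \<subseteq> T \<and> card U = R} \<subseteq> (\<Union>i\<in>{2..R}. \<Union>W'\<in>A i. B W')"
  proof
    fix U assume "U \<in> {U. U \<subseteq> T \<and> card U = R}"
    then have U: "U \<subseteq> T" "card U = R" by simp_all
    then obtain W' where W': "W' \<subseteq> U" "2 \<le> card W'" "P (card W') W'" using cover by blast
    have "card W' \<le> R" using card_mono[OF finite_subset[OF U(1) fT] W'(1)] U(2) by simp
    then show "U \<in> (\<Union>i\<in>{2..R}. \<Union>W'\<in>A i. B W')"
      using W' U by (auto simp: A_def B_def intro!: bexI[of _ "card W'"] bexI[of _ W'])
  qed
  moreover have "finite (\<Union>i\<in>{2..R}. \<Union>W'\<in>A i. B W')"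
    by (rule finite_subset[of _ "Pow T"]) (auto simp: B_def fT)
  ultimately have "card {U. U \<subseteq> T \<and> card U = R} \<le> card (\<Union>i\<in>{2..R}. \<Union>W'\<in>A i. B W')"
    by (intro card_mono)
  then have "card T choose R \<le> card (\<Union>i\<in>{2..R}. \<Union>W'\<in>A i. B W')"
    using fT by (simp add: n_subsets)
  also have "\<dots> \<le> (\<Sum>i\<in>{2..R}. \<Sum>W'\<in>A i. card (B W'))"
    by (intro order.trans[OF card_UN_le] sum_mono card_UN_le fA) simp
  also have "\<dots> = (\<Sum>i\<in>{2..R}. card (A i) * ((card T - i) choose (R - i)))"
    using card_supersets[OF fT] by (intro sum.cong) (auto simp: A_def B_def)
  finally show ?thesis by (simp add: A_def)
qed

text \<open>Binomial estimates: from \<open>C(n,R) C(R,i) = C(n,i) C(n-i,R-i)\<close> and \<open>(n/i)^i \<le> C(n,i)\<close>.\<close>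

lemma choose_ratio_bound:
  assumes "i \<le> R" "R \<le> n" "n choose R \<le> k * a * ((n - i) choose (R - i))"
  shows "n choose i \<le> k * a * (R choose i)"
proof -
  have "(n choose i) * ((n - i) choose (R - i)) = (n choose R) * (R choose i)"
    using choose_mult[OF assms(1,2)] by simp
  also have "\<dots> \<le> (k * a * (R choose i)) * ((n - i) choose (R - i))"
    using assms(3) by (metis mult.commute mult.left_commute mult_le_mono1)
  finally show ?thesis using assms(1,2) by simp
qed

lemma power_bound_from_choose:
  assumes i: "2 \<le> i" "i \<le> R" "R \<le> n" and bound: "n choose i \<le> a * (R * 2 ^ R)"
  shows "1 / (real R ^ R * real R * 2 ^ R) * real n ^ i \<le> real a"
proof -
  have "real n ^ i / real R ^ R \<le> real n ^ i / real i ^ i"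
    using i by (intro divide_left_mono power_mono order.trans[OF power_mono power_increasing]) auto
  also have "\<dots> = (real n / real i) ^ i" by (simp add: power_divide)
  also have "\<dots> \<le> real (n choose i)" using i by (intro binomial_ge_n_over_k_pow_k) simp
  also have "\<dots> \<le> real (a * (R * 2 ^ R))" using bound by (simp only: of_nat_le_iff)
  also have "\<dots> = real a * (real R * 2 ^ R)" by simp
  finally show ?thesis using i by (simp add: field_simps)
qed

lemma supersaturation:
  fixes P :: "nat \<Rightarrow> 'a set \<Rightarrow> bool"
  assumes fT: "finite T" and cT: "card T = n" and R2: "2 \<le> R" and nR: "R \<le> n"
    and cover: "\<And>U. U \<subseteq> T \<Longrightarrow> card U = R \<Longrightarrow> \<exists>W'\<subseteq>U. 2 \<le> card W' \<and> P (card W') W'"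
  shows "\<exists>i\<ge>2. real (card {W'. W' \<subseteq> T \<and> card W' = i \<and> P i W'}) \<ge> 1 / (real R ^ R * real R * 2 ^ R) * real n ^ i"
proof -
  define a where "a i = card {W'. W' \<subseteq> T \<and> card W' = i \<and> P i W'}" for i
  have "n choose R \<le> (\<Sum>i\<in>{2..R}. a i * ((n - i) choose (R - i)))"
    using cover_count[where P=P, OF fT cover] cT by (simp add: a_def)
  then obtain i where i: "i \<in> {2..R}" and "n choose R \<le> card {2..R} * (a i * ((n - i) choose (R - i)))"
    using pigeonhole_sum[of "{2..R}"] R2 by fastforce
  then have "n choose R \<le> (R - 1) * a i * ((n - i) choose (R - i))" using R2 by (simp add: mult.assoc)
  then have "n choose i \<le> (R - 1) * a i * (R choose i)" using i nR by (intro choose_ratio_bound) auto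
  also have "\<dots> = a i * ((R - 1) * (R choose i))" by (simp only: mult_ac)
  also have "\<dots> \<le> a i * (R * 2 ^ R)"
    by (intro mult_le_mono2 mult_le_mono binomial_le_pow2) simp
  finally have "1 / (real R ^ R * real R * 2 ^ R) * real n ^ i \<le> real (a i)"
    using i nR by (intro power_bound_from_choose) auto
  then show ?thesis using i by (auto simp: a_def)
qed

lemma many_good_sets:
  fixes \<Delta> :: "nat set set"
  assumes threshold: "cycle_threshold TYPE('k::field) d w p R0" and R: "R0 \<le> R" "2 \<le> R"
    and sc: "simplicial_complex \<Delta>" and dim: "\<forall>F\<in>\<Delta>. card F \<le> d"
    and TW: "T \<inter> W = {}" and fT: "finite T" and fW: "finite W" and cT: "card T = n"
    and cW: "card W = w" and Rn: "R \<le> n"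
    and hyp: "\<forall>v\<in>T. reduced_homology_nonzero TYPE('k) (induced (lk \<Delta> {v}) W) (int p - 1)"
  shows "\<exists>i\<ge>2. real (card {W'. W' \<subseteq> T \<and> card W' = i \<and>
      reduced_homology_nonzero TYPE('k) (induced \<Delta> (W' \<union> W)) (int p + int i - 2)})
    \<ge> 1 / (real R ^ R * real R * 2 ^ R) * real n ^ i"
proof -
  have cover: "\<exists>W'\<subseteq>U. 2 \<le> card W' \<and>
      reduced_homology_nonzero TYPE('k) (induced \<Delta> (W' \<union> W)) (int p + int (card W') - 2)"
    if U: "U \<subseteq> T" "card U = R" for U
  proof -
    have "finite U" using U(1) fT by (rule finite_subset)
    moreover have "U \<inter> W = {}" "R0 \<le> card U" using U TW R(1) by auto
    moreover have "\<forall>v\<in>U. reduced_homology_nonzero TYPE('k) (induced (lk \<Delta> {v}) W) (int p - 1)"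
      using hyp U(1) by blast
    ultimately show ?thesis using cycle_thresholdD[OF threshold sc dim fW cW] by blast
  qed
  show ?thesis
    by (rule supersaturation[where P="\<lambda>i W'. reduced_homology_nonzero TYPE('k)
      (induced \<Delta> (W' \<union> W)) (int p + int i - 2)", OF fT cT R(2) Rn cover])
qed

theorem mainTheorem12:
  fixes d p w :: nat
  shows "\<exists>C::real. C > 0 \<and> (\<exists>N::nat. \<forall>(\<Delta>::nat set set) T W n.
    simplicial_complex \<Delta> \<and>
    (\<exists>F\<in>\<Delta>. card F = d) \<and> (\<forall>F\<in>\<Delta>. card F \<le> d) \<and>
    \<Delta> \<subseteq> Pow (T \<union> W) \<and> (\<forall>v\<in>T \<union> W. {v} \<in> \<Delta>) \<and>
    T \<inter> W = {} \<and> finite T \<and> finite W \<and> card T = n \<and> card W = w \<and> n \<ge> N \<and>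
    (\<forall>v\<in>T. reduced_homology_nonzero TYPE('k::field) (induced (lk \<Delta> {v}) W) (int p - 1))
    \<longrightarrow>
    (\<exists>i\<ge>2. real (card {W'. W' \<subseteq> T \<and> card W' = i \<and>
        reduced_homology_nonzero TYPE('k) (induced \<Delta> (W' \<union> W)) (int p + int i - 2)})
      \<ge> C * real n ^ i))"
proof -
  obtain R0 where R0: "cycle_threshold TYPE('k) d w p R0" using cycle_threshold_exists by blast
  define R where "R = max R0 2"
  have R: "R0 \<le> R" "2 \<le> R" by (simp_all add: R_def)
  then have C: "0 < 1 / (real R ^ R * real R * 2 ^ R)" by simp
  show ?thesis
    by (rule exI, rule conjI[OF C], rule exI[of _ R], intro allI impI, elim conjE)
      (rule many_good_sets[OF R0 R], assumption+)
qed

end
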